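(* Let $G$ be a graph of order $n$ with a clique partition $F=\{C_1,\dots,C_k\}$, where $s_i^F=|C_i|$ and $s_1^F\ge s_2^F\ge\cdots\ge s_k^F$, and let $P_G$ be the clique partition graph of $G$ with respect to $F$, with adjacency eigenvalues $\lambda_1(P_G)\ge\cdots\ge\lambda_k(P_G)$. Then $$\lambda_k(P_G)\ge -s_1^F.$$ Equality holds if all cliques in $F$ have size $s_1^F$ and $k>n$.
   Context: All graphs are finite and simple. A clique partition of $G$ is a set $F$ of cliques (sets of pairwise adjacent vertices) such that every edge lies in exactly one clique of $F$. The clique partition graph $P_G$ has vertex set $\{1,\dots,k\}$ (vertex $i$ corresponding to $C_i$), with $i\ne j$ adjacent iff $C_i\cap C_j\neq\emptyset$. *)

theory Defs
  imports "Jordan_Normal_Form.Char_Poly"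
begin

definition simple_graph :: "'a set \<Rightarrow> ('a \<Rightarrow> 'a \<Rightarrow> bool) \<Rightarrow> bool" where
  "simple_graph V E \<longleftrightarrow> finite V \<and> (\<forall>u v. E u v \<longrightarrow> u \<in> V \<and> v \<in> V)
     \<and> (\<forall>u v. E u v \<longrightarrow> E v u) \<and> (\<forall>u. \<not> E u u)"

definition is_clique :: "'a set \<Rightarrow> ('a \<Rightarrow> 'a \<Rightarrow> bool) \<Rightarrow> 'a set \<Rightarrow> bool" where
  "is_clique V E C \<longleftrightarrow> C \<subseteq> V \<and> (\<forall>u\<in>C. \<forall>v\<in>C. u \<noteq> v \<longrightarrow> E u v)"

text \<open>A clique partition F = {C_0, ..., C_(k-1)} (indexed from 0, pairwise distinct):
every edge lies in exactly one clique.\<close>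
definition clique_partition :: "'a set \<Rightarrow> ('a \<Rightarrow> 'a \<Rightarrow> bool) \<Rightarrow> nat \<Rightarrow> (nat \<Rightarrow> 'a set) \<Rightarrow> bool" where
  "clique_partition V E k C \<longleftrightarrow> inj_on C {..<k} \<and> (\<forall>i<k. is_clique V E (C i))
     \<and> (\<forall>u v. E u v \<longrightarrow> (\<exists>!i. i < k \<and> u \<in> C i \<and> v \<in> C i))"

definition clique_partition_adj :: "nat \<Rightarrow> (nat \<Rightarrow> 'a set) \<Rightarrow> real mat" where
  "clique_partition_adj k C = mat k k (\<lambda>(i,j). if i \<noteq> j \<and> C i \<inter> C j \<noteq> {} then 1 else 0)"

text \<open>Smallest adjacency eigenvalue (all eigenvalues of a real symmetric matrix are real).\<close>
definition min_eigenvalue :: "real mat \<Rightarrow> real" where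
  "min_eigenvalue A = Min {\<mu>. eigenvalue A \<mu>}"

end

theory Submission
  imports Defs "HOL-Computational_Algebra.Fundamental_Theorem_Algebra"
begin

text \<open>Let \<open>N\<close> be the \<open>k \<times> n\<close> clique-vertex incidence matrix. Two cliques of a clique
partition share at most one vertex, so \<open>N N\<^sup>T = D + A\<close>, where \<open>A\<close> is the adjacency matrix
of \<open>P\<^sub>G\<close> and \<open>D = diag |C\<^sub>i|\<close>. As \<open>N N\<^sup>T\<close> is positive semidefinite,
\<open>y\<^sup>T A y \<ge> - y\<^sup>T D y \<ge> - s\<^sub>1 y\<^sup>T y\<close>, which bounds every eigenvalue of \<open>A\<close>
from below by \<open>-s\<^sub>1\<close>. If \<open>k > n\<close>, some \<open>y \<noteq> 0\<close> has \<open>N\<^sup>T y = 0\<close>; when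
\<open>D = s\<^sub>1 I\<close> this gives \<open>A y = - s\<^sub>1 y\<close>.\<close>

lemma finite_eigenvalues:
  fixes A :: "'a :: field mat"
  assumes "A \<in> carrier_mat n n"
  shows "finite {\<mu>. eigenvalue A \<mu>}"
proof -
  have "char_poly A \<noteq> 0" using degree_monic_char_poly[OF assms] by auto
  then show ?thesis unfolding eigenvalue_root_char_poly[OF assms] by (rule poly_roots_finite)
qed

lemma conjugate_mult_mat_vec_of_real:
  fixes A :: "real mat"
  assumes A: "A \<in> carrier_mat n n" and z: "z \<in> carrier_vec n"
  shows "conjugate (map_mat complex_of_real A *\<^sub>v z) = map_mat complex_of_real A *\<^sub>v conjugate z"
proof (rule eq_vecI)
  let ?B = "map_mat complex_of_real A"
  fix i assume "i < dim_vec (?B *\<^sub>v conjugate z)"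
  then have i: "i < n" using A by simp
  have row: "conjugate (row ?B i) = row ?B i" using A i by (intro eq_vecI) auto
  have "conjugate (?B *\<^sub>v z) $ i = conjugate (row ?B i \<bullet> z)" using A i by simp
  also have "\<dots> = conjugate (row ?B i) \<bullet> conjugate z"
    using A i z by (intro conjugate_sprod_vec) auto
  also have "\<dots> = (?B *\<^sub>v conjugate z) $ i" using A i by (simp only: row) simp
  finally show "conjugate (?B *\<^sub>v z) $ i = (?B *\<^sub>v conjugate z) $ i" .
qed (use A in simp)

lemma real_symmetric_mat_has_eigenvalue:
  fixes A :: "real mat"
  assumes A: "A \<in> carrier_mat n n" and sym: "transpose_mat A = A" and n: "0 < n"
  shows "\<exists>r. eigenvalue A r"
proof -
  let ?B = "map_mat complex_of_real A"
  have B: "?B \<in> carrier_mat n n" and symB: "transpose_mat ?B = ?B"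
    using A sym by (auto simp: map_mat_transpose)
  have "degree (char_poly ?B) = n" using degree_monic_char_poly[OF B] by simp
  then obtain l where l: "poly (char_poly ?B) l = 0"
    using fundamental_theorem_of_algebra constant_degree n by (metis not_gr_zero)
  then obtain z where z: "z \<in> carrier_vec n" "z \<noteq> 0\<^sub>v n" "?B *\<^sub>v z = l \<cdot>\<^sub>v z"
    unfolding eigenvalue_root_char_poly[OF B, symmetric] eigenvalue_def eigenvector_def
    using B by auto
  have "l * (z \<bullet>c z) = (?B *\<^sub>v z) \<bullet>c z" using z by simp
  also have "\<dots> = z \<bullet>c (?B *\<^sub>v z)"
    using transpose_vec_mult_scalar[OF B, of "conjugate z" z] A z(1)
    by (simp add: symB conjugate_mult_mat_vec_of_real)
  also have "\<dots> = cnj l * (z \<bullet>c z)"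
    using z by (simp add: conjugate_smult_vec)
  finally have "l = cnj l" using z(1,2) conjugate_square_greater_0_vec[OF z(1)] by auto
  then have "l \<in> \<real>" by (simp add: Reals_cnj_iff)
  then have l_real: "of_real (Re l) = l" by (rule of_real_Re)
  have "of_real (poly (char_poly A) (Re l)) = poly (char_poly ?B) (of_real (Re l))"
    unfolding of_real_hom.char_poly_hom[OF A] by (rule of_real_hom.poly_map_poly[symmetric])
  also have "\<dots> = 0" using l l_real by simp
  finally show ?thesis using eigenvalue_root_char_poly[OF A] by auto
qed

lemma min_eigenvalue_ge:
  assumes "A \<in> carrier_mat n n" and "\<exists>\<mu>. eigenvalue A \<mu>"
    and "\<And>\<mu>. eigenvalue A \<mu> \<Longrightarrow> c \<le> \<mu>"
  shows "c \<le> min_eigenvalue A"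
  using assms finite_eigenvalues[OF assms(1)] unfolding min_eigenvalue_def by (simp add: Min_ge_iff)

lemma min_eigenvalue_eqI:
  assumes "A \<in> carrier_mat n n" and "eigenvalue A c"
    and "\<And>\<mu>. eigenvalue A \<mu> \<Longrightarrow> c \<le> \<mu>"
  shows "min_eigenvalue A = c"
  unfolding min_eigenvalue_def using assms finite_eigenvalues[OF assms(1)] by (intro Min_eqI) auto

lemma index_mult_mat_vec_sum:
  assumes "A \<in> carrier_mat n m" and "y \<in> carrier_vec m" and "i < n"
  shows "(A *\<^sub>v y) $ i = (\<Sum>j<m. A $$ (i, j) * y $ j)"
  using assms by (auto simp: scalar_prod_def lessThan_atLeast0 intro!: sum.cong)

lemma homogeneous_system_nontrivial_solution:
  fixes a :: "'b \<Rightarrow> nat \<Rightarrow> 'f :: idom"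
  assumes fin: "finite V" and lt: "card V < k"
  shows "\<exists>y \<in> carrier_vec k. y \<noteq> 0\<^sub>v k \<and> (\<forall>v\<in>V. (\<Sum>j<k. a v j * y $ j) = 0)"
proof -
  obtain g where g: "bij_betw g {0..<card V} V" using ex_bij_betw_nat_finite[OF fin] by blast
  define c where "c i = vec k (\<lambda>j. if i < card V then a (g i) j else 0)" for i
  \<comment> \<open>\<open>c (k - 1)\<close> is zero already; the explicit zero row is the shape \<open>det_row_0\<close> expects\<close>
  define M where "M = mat\<^sub>r k k (\<lambda>i. if i = k - 1 then 0\<^sub>v k else c i)"
  have M: "M \<in> carrier_mat k k" unfolding M_def by simp
  have "det M = 0" unfolding M_def using lt by (intro det_row_0) (auto simp: c_def)
  then obtain y where y: "y \<in> carrier_vec k" "y \<noteq> 0\<^sub>v k" "M *\<^sub>v y = 0\<^sub>v k"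
    using det_0_iff_vec_prod_zero[OF M] by blast
  have "(\<Sum>j<k. a v j * y $ j) = 0" if "v \<in> V" for v
  proof -
    have "v \<in> g ` {0..<card V}" using g \<open>v \<in> V\<close> unfolding bij_betw_def by simp
    then obtain i where i: "i < card V" "v = g i" by auto
    then have "i < k" "i \<noteq> k - 1" using lt by auto
    then have "(\<Sum>j<k. M $$ (i, j) * y $ j) = (M *\<^sub>v y) $ i"
      using index_mult_mat_vec_sum[OF M y(1)] by simp
    also have "\<dots> = 0" using y(3) \<open>i < k\<close> by simp
    finally have "(\<Sum>j<k. M $$ (i, j) * y $ j) = 0" .
    then show ?thesis using \<open>i < k\<close> \<open>i \<noteq> k - 1\<close> i by (simp add: M_def c_def)
  qed
  then show ?thesis using y by blast
qed

text \<open>\<open>incidence_sum k C y v\<close> is the entry of \<open>N\<^sup>T y\<close> at the vertex \<open>v\<close>.\<close>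

definition incidence_sum :: "nat \<Rightarrow> (nat \<Rightarrow> 'a set) \<Rightarrow> real vec \<Rightarrow> 'a \<Rightarrow> real" where
  "incidence_sum k C y v = (\<Sum>j<k. if v \<in> C j then y $ j else 0)"

lemma clique_partition_is_clique:
  "clique_partition V E k C \<Longrightarrow> i < k \<Longrightarrow> is_clique V E (C i)"
  unfolding clique_partition_def by blast

lemma clique_partition_unique:
  "clique_partition V E k C \<Longrightarrow> E u v \<Longrightarrow> \<exists>!l. l < k \<and> u \<in> C l \<and> v \<in> C l"
  unfolding clique_partition_def by blast

lemma clique_partition_subset:
  assumes "clique_partition V E k C" and "i < k"
  shows "C i \<subseteq> V"
  using clique_partition_is_clique[OF assms] by (simp add: is_clique_def)

lemma clique_partition_card_Int:
  assumes P: "clique_partition V E k C" and i: "i < k" and j: "j < k" and "i \<noteq> j"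
  shows "card (C i \<inter> C j) = (if C i \<inter> C j = {} then 0 else 1)"
proof (cases "C i \<inter> C j = {}")
  case False
  then obtain u where u: "u \<in> C i \<inter> C j" by blast
  have "v = u" if v: "v \<in> C i \<inter> C j" for v
  proof (rule ccontr)
    assume "v \<noteq> u"
    then have "E u v"
      using clique_partition_is_clique[OF P i] u v by (simp add: is_clique_def)
    then have "\<exists>!l. l < k \<and> u \<in> C l \<and> v \<in> C l" by (rule clique_partition_unique[OF P])
    then have "i = j" using u v i j by blast
    with \<open>i \<noteq> j\<close> show False ..
  qed
  with u have "C i \<inter> C j = {u}" by blast
  then show ?thesis by simp
qed simp

lemma dim_clique_partition_adj [simp]:
  "dim_row (clique_partition_adj k C) = k" "dim_col (clique_partition_adj k C) = k"
  unfolding clique_partition_adj_def by simp_all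

lemma clique_partition_adj_carrier: "clique_partition_adj k C \<in> carrier_mat k k"
  by (simp add: carrier_matI)

lemma clique_partition_adj_symmetric:
  "transpose_mat (clique_partition_adj k C) = clique_partition_adj k C"
  unfolding clique_partition_adj_def by (auto simp: Int_commute)

lemma sum_incidence_sum_clique:
  assumes fin: "finite V" and P: "clique_partition V E k C"
    and i: "i < k" and y: "y \<in> carrier_vec k"
  shows "(\<Sum>v\<in>C i. incidence_sum k C y v)
    = real (card (C i)) * y $ i + (clique_partition_adj k C *\<^sub>v y) $ i"
proof -
  have fin_Ci: "finite (C i)" using finite_subset[OF clique_partition_subset[OF P i] fin] .
  have "(\<Sum>v\<in>C i. incidence_sum k C y v)
      = (\<Sum>j<k. \<Sum>v\<in>C i. if v \<in> C j then y $ j else 0)"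
    unfolding incidence_sum_def by (rule sum.swap)
  also have "\<dots> = (\<Sum>j<k. real (card (C i \<inter> C j)) * y $ j)"
    by (simp add: sum.inter_restrict[OF fin_Ci, symmetric])
  also have "\<dots> = (\<Sum>j<k. (if j = i then real (card (C i)) * y $ i else 0)
      + clique_partition_adj k C $$ (i, j) * y $ j)"
  proof (intro sum.cong refl)
    fix j assume "j \<in> {..<k}"
    then show "real (card (C i \<inter> C j)) * y $ j
        = (if j = i then real (card (C i)) * y $ i else 0)
          + clique_partition_adj k C $$ (i, j) * y $ j"
      using i clique_partition_card_Int[OF P i, of j]
      by (cases "j = i") (auto simp: clique_partition_adj_def)
  qed
  also have "\<dots> = real (card (C i)) * y $ i + (clique_partition_adj k C *\<^sub>v y) $ i"
    using i index_mult_mat_vec_sum[OF clique_partition_adj_carrier[of k C] y i]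
    by (simp add: sum.distrib)
  finally show ?thesis .
qed

lemma sum_incidence_sum_square:
  assumes fin: "finite V" and P: "clique_partition V E k C" and y: "y \<in> carrier_vec k"
  shows "(\<Sum>v\<in>V. (incidence_sum k C y v)\<^sup>2)
    = (\<Sum>i<k. real (card (C i)) * (y $ i)\<^sup>2) + y \<bullet> (clique_partition_adj k C *\<^sub>v y)"
proof -
  let ?w = "incidence_sum k C y" and ?A = "clique_partition_adj k C"
  have clique_sum: "(\<Sum>v\<in>V. (if v \<in> C i then y $ i else 0) * ?w v) = y $ i * (\<Sum>v\<in>C i. ?w v)"
    if "i < k" for i
  proof -
    have "V \<inter> C i = C i" using clique_partition_subset[OF P that] by blast
    have "(\<Sum>v\<in>V. (if v \<in> C i then y $ i else 0) * ?w v)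
        = (\<Sum>v\<in>V. if v \<in> C i then y $ i * ?w v else 0)"
      by (intro sum.cong) auto
    also have "\<dots> = (\<Sum>v\<in>C i. y $ i * ?w v)"
      by (simp add: sum.inter_restrict[OF fin, symmetric] \<open>V \<inter> C i = C i\<close>)
    finally show ?thesis by (simp add: sum_distrib_left)
  qed
  have "(\<Sum>v\<in>V. (?w v)\<^sup>2) = (\<Sum>v\<in>V. \<Sum>i<k. (if v \<in> C i then y $ i else 0) * ?w v)"
    by (simp add: power2_eq_square sum_distrib_right incidence_sum_def)
  also have "\<dots> = (\<Sum>i<k. \<Sum>v\<in>V. (if v \<in> C i then y $ i else 0) * ?w v)"
    by (rule sum.swap)
  also have "\<dots> = (\<Sum>i<k. y $ i * (\<Sum>v\<in>C i. ?w v))"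
    by (intro sum.cong) (simp_all add: clique_sum)
  also have "\<dots> = (\<Sum>i<k. real (card (C i)) * (y $ i)\<^sup>2 + y $ i * (?A *\<^sub>v y) $ i)"
    using sum_incidence_sum_clique[OF fin P _ y]
    by (intro sum.cong) (auto simp: algebra_simps power2_eq_square)
  also have "\<dots> = (\<Sum>i<k. real (card (C i)) * (y $ i)\<^sup>2) + y \<bullet> (?A *\<^sub>v y)"
    by (simp add: sum.distrib scalar_prod_def lessThan_atLeast0 del: index_mult_mat_vec)
  finally show ?thesis .
qed

lemma clique_partition_adj_eigenvalue_ge:
  assumes fin: "finite V" and P: "clique_partition V E k C"
    and bound: "\<forall>i<k. card (C i) \<le> s"
    and ev: "eigenvalue (clique_partition_adj k C) \<mu>"
  shows "- real s \<le> \<mu>"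
proof -
  let ?A = "clique_partition_adj k C"
  obtain y where y: "y \<in> carrier_vec k" "y \<noteq> 0\<^sub>v k" "?A *\<^sub>v y = \<mu> \<cdot>\<^sub>v y"
    using ev clique_partition_adj_carrier[of k C] unfolding eigenvalue_def eigenvector_def by auto
  have norm: "y \<bullet> y = (\<Sum>i<k. (y $ i)\<^sup>2)"
    using y(1) by (simp add: scalar_prod_def lessThan_atLeast0 power2_eq_square)
  have "(\<Sum>i<k. real (card (C i)) * (y $ i)\<^sup>2) \<le> (\<Sum>i<k. real s * (y $ i)\<^sup>2)"
    using bound by (intro sum_mono mult_right_mono) auto
  also have "\<dots> = real s * (y \<bullet> y)" by (simp add: norm sum_distrib_left)
  finally have "- real s * (y \<bullet> y) \<le> y \<bullet> (?A *\<^sub>v y)"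
    using sum_incidence_sum_square[OF fin P y(1)]
      sum_nonneg[of V "\<lambda>v. (incidence_sum k C y v)\<^sup>2"]
    by auto
  also have "\<dots> = \<mu> * (y \<bullet> y)" using y by simp
  finally have "- real s * (y \<bullet> y) \<le> \<mu> * (y \<bullet> y)" .
  moreover have "0 < y \<bullet> y" using conjugate_square_greater_0_vec[OF y(1)] y(2) by simp
  ultimately show ?thesis using mult_le_cancel_right_pos by blast
qed

lemma clique_partition_adj_eigenvalue_neg_card:
  assumes fin: "finite V" and P: "clique_partition V E k C"
    and lt: "card V < k" and uniform: "\<forall>i<k. card (C i) = s"
  shows "eigenvalue (clique_partition_adj k C) (- real s)"
proof -
  let ?A = "clique_partition_adj k C"
  obtain y where y: "y \<in> carrier_vec k" "y \<noteq> 0\<^sub>v k"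
    and sol: "\<forall>v\<in>V. (\<Sum>j<k. (if v \<in> C j then 1 else 0) * y $ j) = (0::real)"
    using homogeneous_system_nontrivial_solution[OF fin lt,
        of "\<lambda>v j. if v \<in> C j then 1 else 0"]
    by blast
  have "(\<Sum>j<k. (if v \<in> C j then 1 else 0) * y $ j) = incidence_sum k C y v" for v
    unfolding incidence_sum_def by (intro sum.cong) auto
  with sol have kernel: "incidence_sum k C y v = 0" if "v \<in> V" for v
    using that by simp
  have "?A *\<^sub>v y = (- real s) \<cdot>\<^sub>v y"
  proof (rule eq_vecI)
    fix i assume "i < dim_vec ((- real s) \<cdot>\<^sub>v y)"
    then have i: "i < k" using y(1) by simp
    have "(\<Sum>v\<in>C i. incidence_sum k C y v) = 0"
      using kernel clique_partition_subset[OF P i] by (intro sum.neutral) blast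
    then show "(?A *\<^sub>v y) $ i = ((- real s) \<cdot>\<^sub>v y) $ i"
      using sum_incidence_sum_clique[OF fin P i y(1)] uniform i y(1) by simp
  qed (use y(1) in simp)
  then show ?thesis
    using y clique_partition_adj_carrier[of k C] unfolding eigenvalue_def eigenvector_def by auto
qed

theorem mainTheorem6:
  fixes V :: "'a set" and E :: "'a \<Rightarrow> 'a \<Rightarrow> bool" and k :: nat and C :: "nat \<Rightarrow> 'a set"
  assumes "simple_graph V E"
    and "clique_partition V E k C"
    and "k \<ge> 1"
    and "\<forall>i j. i \<le> j \<and> j < k \<longrightarrow> card (C j) \<le> card (C i)"
  shows "min_eigenvalue (clique_partition_adj k C) \<ge> - real (card (C 0))
    \<and> ((\<forall>i<k. card (C i) = card (C 0)) \<and> k > card V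
           \<longrightarrow> min_eigenvalue (clique_partition_adj k C) = - real (card (C 0)))"
proof -
  let ?A = "clique_partition_adj k C" and ?s = "card (C 0)"
  have fin: "finite V" using assms(1) unfolding simple_graph_def by blast
  have "\<forall>i<k. card (C i) \<le> ?s" using assms(4) by auto
  then have lower: "- real ?s \<le> \<mu>" if "eigenvalue ?A \<mu>" for \<mu>
    using clique_partition_adj_eigenvalue_ge[OF fin assms(2) _ that] by blast
  have "\<exists>\<mu>. eigenvalue ?A \<mu>"
    by (rule real_symmetric_mat_has_eigenvalue[OF clique_partition_adj_carrier
          clique_partition_adj_symmetric]) (use assms(3) in simp)
  then have "- real ?s \<le> min_eigenvalue ?A"
    using min_eigenvalue_ge[OF clique_partition_adj_carrier _ lower] by blast
  moreover have "min_eigenvalue ?A = - real ?s"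
    if "\<forall>i<k. card (C i) = ?s" and "card V < k"
    using min_eigenvalue_eqI[OF clique_partition_adj_carrier
        clique_partition_adj_eigenvalue_neg_card[OF fin assms(2) that(2,1)] lower] .
  ultimately show ?thesis by blast
qed

end
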